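(* For every $\eta,\varepsilon\in(0,1/3]$ (and $d\in\mathbb{N}$) there is $N=N(\eta,\varepsilon)\in\mathbb{N}$ such that the following holds for every integer $m'\ge0$ and all sufficiently small $\delta>0$. For every cube $Q\in\mathcal{D}_{m'}$ there exists a set $B\subset4Q$ with $|B|\le\eta|Q|$ such that $$\bigl|(a_0+Q)\cap(A+B)\bigr|\ge(1-\varepsilon)|Q|$$ for all sets $A\subset[0,2^{-m'}]^d$ with $|A|_\delta\ge N$ and all $a_0\in A$. Moreover, $B$ can be taken to be a union of closed dyadic cubes all of the same size, this size depending only on $d,\eta,\varepsilon,\delta,m'$.
   Context: $\mathcal{D}_{m'}$ is the family of closed dyadic cubes in $\mathbb{R}^d$ of side length $2^{-m'}$; for a cube $Q$, $4Q$ is the cube with the same centre and four times the side length. $|E|_\delta$ is the smallest number of balls of radius $\delta$ covering $E$; $|B|,|Q|$ denote Lebesgue measure. *)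

theory Defs
  imports "HOL-Analysis.Analysis"
begin

definition dyadic_cube :: "int \<Rightarrow> 'a::euclidean_space \<Rightarrow> 'a set" where
  "dyadic_cube k v = cbox ((2 powr (- real_of_int k)) *\<^sub>R v)
                          ((2 powr (- real_of_int k)) *\<^sub>R (v + One))"

definition int_lattice :: "'a::euclidean_space set" where
  "int_lattice = {v. \<forall>i\<in>Basis. v \<bullet> i \<in> \<int>}"

definition dyadic_cubes :: "int \<Rightarrow> 'a::euclidean_space set set" where
  "dyadic_cubes k = {dyadic_cube k v | v. v \<in> int_lattice}"

text \<open>4Q for Q = dyadic_cube k v: same centre, four times the side length.\<close>
definition dyadic_cube4 :: "int \<Rightarrow> 'a::euclidean_space \<Rightarrow> 'a set" where
  "dyadic_cube4 k v = cbox ((2 powr (- real_of_int k)) *\<^sub>R (v - (3/2) *\<^sub>R One))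
                           ((2 powr (- real_of_int k)) *\<^sub>R (v + (5/2) *\<^sub>R One))"

definition covering_number :: "real \<Rightarrow> 'a::euclidean_space set \<Rightarrow> nat" where
  "covering_number \<delta> E =
     Inf {n. \<exists>C. finite C \<and> card C = n \<and> E \<subseteq> (\<Union>c\<in>C. cball c \<delta>)}"

definition set_plus :: "'a::euclidean_space set \<Rightarrow> 'a set \<Rightarrow> 'a set" where
  "set_plus A B = {a + b | a b. a \<in> A \<and> b \<in> B}"

abbreviation lmeas :: "'a::euclidean_space set \<Rightarrow> ennreal" where
  "lmeas E \<equiv> outer_measure_of lebesgue E"

end

theory Submission
  imports Defs "HOL-Real_Asymp.Real_Asymp"
begin

text \<open>Work at the scale \<open>\<tau> = 2\<^sup>-\<^sup>k\<close>, with \<open>n\<close> grid cells along each side of \<open>Q\<close>, where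
  \<open>d \<tau> \<le> \<delta>\<close>. Then \<open>|A|\<^sub>\<delta> \<ge> N\<close> forces \<open>A\<close> to meet at least \<open>N\<close> cells; let \<open>Y\<close> be \<open>N\<close> of them.
  Take \<open>B\<close> to be the union of the cubes of \<open>D\<^sub>k\<close> with a corner in \<open>\<tau> (n v + S)\<close>, where \<open>S\<close> is the
  zero set of a random \<open>K\<close>-colouring of \<open>{-n..2n}\<^sup>d\<close>. A point of \<open>a\<^sub>0 + Q\<close> in the cell \<open>n v + u\<close> lies
  in \<open>A + B\<close> as soon as \<open>u - y \<in> S\<close> for some \<open>y \<in> Y\<close>. If a translate \<open>t + {0..n}\<^sup>d\<close> had
  \<open>(N\<^sup>2 + 1) a\<close> points \<open>u\<close> with \<open>u - Y\<close> disjoint from \<open>S\<close>, then \<open>a\<close> of them would have pairwise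
  disjoint translates \<open>u - Y\<close>, an event of probability \<open>(1 - 1/K)\<^sup>a\<^sup>N\<close>. Choosing \<open>K \<sim> 8\<^sup>d/\<eta>\<close>,
  then \<open>N\<close> with \<open>N\<^sup>2 (1 - 1/K)\<^sup>N\<close> small and \<open>a \<approx> \<epsilon> n\<^sup>d / N\<^sup>2\<close>, a union bound over the polynomially
  many configurations \<open>(Y, t)\<close> leaves some colouring with \<open>|B| \<le> \<eta> |Q|\<close> and at most \<open>\<epsilon> n\<^sup>d\<close>
  uncovered cells in every configuration, which gives \<open>|(a\<^sub>0 + Q) \<inter> (A + B)| \<ge> (1 - \<epsilon>) |Q|\<close>.\<close>

section \<open>Lattice points and grid cells\<close>

definition lattice_floor :: "'a::euclidean_space \<Rightarrow> 'a" where
  "lattice_floor x = (\<Sum>b\<in>Basis. of_int \<lfloor>x \<bullet> b\<rfloor> *\<^sub>R b)"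

lemma inner_lattice_floor [simp]: "b \<in> Basis \<Longrightarrow> lattice_floor x \<bullet> b = of_int \<lfloor>x \<bullet> b\<rfloor>"
  by (simp add: lattice_floor_def inner_sum_left inner_Basis if_distrib cong: if_cong)

lemma lattice_floor_in_int_lattice: "lattice_floor x \<in> int_lattice"
  by (simp add: int_lattice_def)

lemma int_lattice_add: "p \<in> int_lattice \<Longrightarrow> q \<in> int_lattice \<Longrightarrow> p + q \<in> int_lattice"
  by (auto simp: int_lattice_def inner_add_left)

lemma int_lattice_diff: "p \<in> int_lattice \<Longrightarrow> q \<in> int_lattice \<Longrightarrow> p - q \<in> int_lattice"
  by (auto simp: int_lattice_def inner_diff_left)

lemma int_lattice_scaleR_of_nat: "p \<in> int_lattice \<Longrightarrow> real n *\<^sub>R p \<in> int_lattice"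
  by (auto simp: int_lattice_def)

definition lattice_box :: "int \<Rightarrow> int \<Rightarrow> 'a::euclidean_space set" where
  "lattice_box lo hi = {p \<in> int_lattice. \<forall>b\<in>Basis. of_int lo \<le> p \<bullet> b \<and> p \<bullet> b \<le> of_int hi}"

lemma lattice_box_subset_int_lattice: "lattice_box lo hi \<subseteq> int_lattice"
  by (auto simp: lattice_box_def)

lemma finite_lattice_box_and_card:
  "finite (lattice_box lo hi :: 'a::euclidean_space set) \<and>
   card (lattice_box lo hi :: 'a set) \<le> nat (hi - lo + 1) ^ DIM('a)"
proof -
  define g where "g p = restrict (\<lambda>b. \<lfloor>p \<bullet> b\<rfloor>) Basis" for p :: 'a
  have inj: "inj_on g (lattice_box lo hi)"
  proof
    fix p q assume p: "p \<in> lattice_box lo hi" and q: "q \<in> lattice_box lo hi" and "g p = g q"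
    show "p = q"
    proof (rule euclidean_eqI)
      fix b :: 'a assume b: "b \<in> Basis"
      have "\<lfloor>p \<bullet> b\<rfloor> = \<lfloor>q \<bullet> b\<rfloor>" using \<open>g p = g q\<close> b unfolding g_def restrict_def by meson
      moreover have "p \<bullet> b \<in> \<int>" "q \<bullet> b \<in> \<int>" using p q b by (auto simp: lattice_box_def int_lattice_def)
      ultimately show "p \<bullet> b = q \<bullet> b" by (auto elim!: Ints_cases)
    qed
  qed
  have sub: "g ` lattice_box lo hi \<subseteq> PiE Basis (\<lambda>_. {lo..hi})"
  proof (rule image_subsetI)
    fix p :: 'a assume p: "p \<in> lattice_box lo hi"
    have "\<lfloor>p \<bullet> b\<rfloor> \<in> {lo..hi}" if b: "b \<in> Basis" for b
    proof -
      obtain z where "p \<bullet> b = of_int z" using p b by (auto simp: lattice_box_def int_lattice_def elim!: Ints_cases)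
      then show ?thesis using p b by (auto simp: lattice_box_def)
    qed
    then show "g p \<in> PiE Basis (\<lambda>_. {lo..hi})" by (auto simp: g_def)
  qed
  have fin: "finite (PiE Basis (\<lambda>_::'a. {lo..hi}))" by (simp add: finite_PiE)
  have "finite (lattice_box lo hi :: 'a set)"
    using finite_imageD[OF finite_subset[OF sub fin] inj] .
  moreover have "card (lattice_box lo hi :: 'a set) \<le> card (PiE Basis (\<lambda>_::'a. {lo..hi}))"
    using card_mono[OF fin sub] card_image[OF inj] by simp
  ultimately show ?thesis by (simp add: card_PiE)
qed

lemma finite_lattice_box [simp]: "finite (lattice_box lo hi)"
  by (rule conjunct1[OF finite_lattice_box_and_card])

lemma card_lattice_box_le: "card (lattice_box lo hi :: 'a::euclidean_space set) \<le> nat (hi - lo + 1) ^ DIM('a)"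
  by (rule conjunct2[OF finite_lattice_box_and_card])

definition grid_cell :: "real \<Rightarrow> 'a::euclidean_space \<Rightarrow> 'a" where
  "grid_cell \<tau> x = lattice_floor ((1 / \<tau>) *\<^sub>R x)"

lemma inner_grid_cell [simp]: "b \<in> Basis \<Longrightarrow> grid_cell \<tau> x \<bullet> b = of_int \<lfloor>x \<bullet> b / \<tau>\<rfloor>"
  by (simp add: grid_cell_def)

lemma grid_cell_in_int_lattice: "grid_cell \<tau> x \<in> int_lattice"
  by (simp add: grid_cell_def lattice_floor_in_int_lattice)

lemma mem_grid_cell:
  fixes x :: "'a::euclidean_space"
  assumes "\<tau> > 0"
  shows "x \<in> cbox (\<tau> *\<^sub>R grid_cell \<tau> x) (\<tau> *\<^sub>R (grid_cell \<tau> x + One))"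
proof -
  have "\<tau> * of_int \<lfloor>r / \<tau>\<rfloor> \<le> r \<and> r \<le> \<tau> * (of_int \<lfloor>r / \<tau>\<rfloor> + 1)" for r
  proof -
    have "of_int \<lfloor>r / \<tau>\<rfloor> \<le> r / \<tau>" "r / \<tau> \<le> of_int \<lfloor>r / \<tau>\<rfloor> + 1"
      by linarith+
    then show ?thesis
      using assms by (simp only: pos_le_divide_eq pos_divide_le_eq mult.commute)
  qed
  then show ?thesis by (simp add: mem_box inner_add_left)
qed

lemma mem_dyadic_cube_grid_cell: "x \<in> dyadic_cube k (grid_cell (2 powr - of_int k) x)"
  unfolding dyadic_cube_def by (rule mem_grid_cell) simp

lemma covering_number_le:
  assumes "finite C" "E \<subseteq> (\<Union>c\<in>C. cball c \<delta>)"
  shows "covering_number \<delta> E \<le> card C"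
  unfolding covering_number_def by (rule cInf_lower) (use assms in auto)

text \<open>A cell of side \<open>\<tau>\<close> has diameter at most \<open>DIM('a) * \<tau>\<close> in the norm, so the corners of
  the cells met by \<open>A\<close> are the centres of a \<open>\<delta>\<close>-cover of \<open>A\<close>.\<close>
lemma covering_number_le_card_grid_cells:
  fixes A :: "'a::euclidean_space set"
  assumes "\<tau> > 0" "real DIM('a) * \<tau> \<le> \<delta>" "finite (grid_cell \<tau> ` A)"
  shows "covering_number \<delta> A \<le> card (grid_cell \<tau> ` A)"
proof -
  have "A \<subseteq> (\<Union>c\<in>(*\<^sub>R) \<tau> ` grid_cell \<tau> ` A. cball c \<delta>)"
  proof
    fix x assume x: "x \<in> A"
    define c where "c = \<tau> *\<^sub>R grid_cell \<tau> x"
    have "\<bar>(c - x) \<bullet> b\<bar> \<le> \<tau>" if "b \<in> Basis" for b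
      using mem_grid_cell[OF assms(1), of x] that
      by (auto simp: mem_box c_def inner_add_left inner_diff_left algebra_simps)
    then have "norm (c - x) \<le> real DIM('a) * \<tau>"
      using norm_le_l1[of "c - x"] sum_mono[of Basis "\<lambda>b. \<bar>(c - x) \<bullet> b\<bar>" "\<lambda>_. \<tau>"] by simp
    then have "x \<in> cball c \<delta>" using assms(2) by (simp add: dist_norm norm_minus_commute)
    then show "x \<in> (\<Union>c\<in>(*\<^sub>R) \<tau> ` grid_cell \<tau> ` A. cball c \<delta>)"
      using x by (auto simp: c_def)
  qed
  then have "covering_number \<delta> A \<le> card ((*\<^sub>R) \<tau> ` grid_cell \<tau> ` A)"
    using assms(3) by (intro covering_number_le) auto
  also have "\<dots> \<le> card (grid_cell \<tau> ` A)" using assms(3) by (rule card_image_le)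
  finally show ?thesis .
qed

lemma grid_cells_subset_lattice_box:
  fixes A :: "'a::euclidean_space set"
  assumes "\<tau> > 0" "A \<subseteq> cbox 0 ((\<tau> * real n) *\<^sub>R One)"
  shows "grid_cell \<tau> ` A \<subseteq> lattice_box 0 (int n)"
proof clarify
  fix x assume "x \<in> A"
  then have "0 \<le> x \<bullet> b / \<tau> \<and> x \<bullet> b / \<tau> \<le> real n" if "b \<in> Basis" for b
    using assms that by (auto simp: mem_box field_simps)
  then show "grid_cell \<tau> x \<in> lattice_box 0 (int n)"
    by (auto simp: lattice_box_def grid_cell_in_int_lattice intro: order_trans[OF of_int_floor_le])
qed

lemma floor_diff_bounds:
  fixes a b :: real
  shows "of_int \<lfloor>a\<rfloor> - of_int \<lfloor>b\<rfloor> - 1 \<le> (of_int \<lfloor>a - b\<rfloor> :: real)"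
    and "of_int \<lfloor>a - b\<rfloor> \<le> (of_int \<lfloor>a\<rfloor> - of_int \<lfloor>b\<rfloor> :: real)"
proof -
  have "\<lfloor>a\<rfloor> - \<lfloor>b\<rfloor> - 1 \<le> \<lfloor>a - b\<rfloor>" "\<lfloor>a - b\<rfloor> < \<lfloor>a\<rfloor> - \<lfloor>b\<rfloor> + 1"
    by (simp_all add: le_floor_iff floor_less_iff) linarith+
  then show "of_int \<lfloor>a\<rfloor> - of_int \<lfloor>b\<rfloor> - 1 \<le> (of_int \<lfloor>a - b\<rfloor> :: real)"
    and "of_int \<lfloor>a - b\<rfloor> \<le> (of_int \<lfloor>a\<rfloor> - of_int \<lfloor>b\<rfloor> :: real)"
    by linarith+
qed

lemma grid_cell_diff_mem_lattice_box:
  "grid_cell \<tau> (z - x) - (grid_cell \<tau> z - grid_cell \<tau> x) \<in> lattice_box (-1) 0"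
proof -
  have "-1 \<le> (grid_cell \<tau> (z - x) - (grid_cell \<tau> z - grid_cell \<tau> x)) \<bullet> b
      \<and> (grid_cell \<tau> (z - x) - (grid_cell \<tau> z - grid_cell \<tau> x)) \<bullet> b \<le> 0" if "b \<in> Basis" for b
    using that floor_diff_bounds[of "z \<bullet> b / \<tau>" "x \<bullet> b / \<tau>"]
    by (simp add: inner_diff_left diff_divide_distrib)
  then show ?thesis by (simp add: lattice_box_def grid_cell_in_int_lattice int_lattice_diff)
qed

lemma floor_add_bounds:
  fixes \<alpha> \<beta> :: real and m n :: int
  assumes "of_int m \<le> \<beta>" "\<beta> \<le> of_int m + of_int n"
  shows "\<lfloor>\<alpha>\<rfloor> + m \<le> \<lfloor>\<alpha> + \<beta>\<rfloor> \<and> \<lfloor>\<alpha> + \<beta>\<rfloor> \<le> \<lfloor>\<alpha>\<rfloor> + m + n"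
proof -
  have "of_int \<lfloor>\<alpha>\<rfloor> + of_int m \<le> \<alpha> + \<beta>" "\<alpha> + \<beta> < of_int \<lfloor>\<alpha>\<rfloor> + of_int m + of_int n + 1"
    using assms of_int_floor_le[of \<alpha>] real_of_int_floor_add_one_gt[of \<alpha>] by linarith+
  then have "\<lfloor>\<alpha>\<rfloor> + m \<le> \<lfloor>\<alpha> + \<beta>\<rfloor>" "\<lfloor>\<alpha> + \<beta>\<rfloor> < \<lfloor>\<alpha>\<rfloor> + m + n + 1"
    unfolding le_floor_iff floor_less_iff by simp_all
  then show ?thesis by linarith
qed

lemma grid_cell_add_mem_lattice_box:
  fixes a q v :: "'a::euclidean_space"
  assumes "\<tau> > 0" "v \<in> int_lattice" "q \<in> cbox ((\<tau> * real n) *\<^sub>R v) ((\<tau> * real n) *\<^sub>R (v + One))"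
  shows "grid_cell \<tau> (a + q) - real n *\<^sub>R v - grid_cell \<tau> a \<in> lattice_box 0 (int n)"
proof -
  have "0 \<le> (grid_cell \<tau> (a + q) - real n *\<^sub>R v - grid_cell \<tau> a) \<bullet> b
      \<and> (grid_cell \<tau> (a + q) - real n *\<^sub>R v - grid_cell \<tau> a) \<bullet> b \<le> real n"
    if b: "b \<in> Basis" for b
  proof -
    obtain i where i: "v \<bullet> b = of_int i"
      using assms(2) b by (auto simp: int_lattice_def elim!: Ints_cases)
    have "\<tau> * real n * (v \<bullet> b) \<le> q \<bullet> b" "q \<bullet> b \<le> \<tau> * real n * (v \<bullet> b + 1)"
      using assms(3) b by (auto simp: mem_box inner_add_left)
    then have "of_int (int n * i) \<le> q \<bullet> b / \<tau>" "q \<bullet> b / \<tau> \<le> of_int (int n * i) + of_int (int n)"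
      using assms(1) i by (simp_all add: field_simps)
    from floor_add_bounds[OF this, of "a \<bullet> b / \<tau>"]
    have "real_of_int (\<lfloor>a \<bullet> b / \<tau>\<rfloor> + int n * i) \<le> of_int \<lfloor>a \<bullet> b / \<tau> + q \<bullet> b / \<tau>\<rfloor>"
      "real_of_int \<lfloor>a \<bullet> b / \<tau> + q \<bullet> b / \<tau>\<rfloor> \<le> of_int (\<lfloor>a \<bullet> b / \<tau>\<rfloor> + int n * i + int n)"
      by (simp_all only: of_int_le_iff)
    then show ?thesis
      using b i by (simp add: inner_diff_left inner_add_left add_divide_distrib)
  qed
  then show ?thesis
    by (simp add: lattice_box_def grid_cell_in_int_lattice int_lattice_diff int_lattice_scaleR_of_nat assms(2))
qed

lemma emeasure_cbox_cube:
  fixes c :: "'a::euclidean_space"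
  assumes "0 \<le> \<tau>"
  shows "emeasure lebesgue (cbox c (c + \<tau> *\<^sub>R One)) = ennreal (\<tau> ^ DIM('a))"
proof -
  have "emeasure lebesgue (cbox c (c + \<tau> *\<^sub>R One)) = ennreal (\<Prod>b\<in>(Basis::'a set). \<tau>)"
    using assms by (simp add: emeasure_lborel_cbox inner_add_left)
  then show ?thesis by simp
qed

lemma dyadic_cube_eq_cbox: "dyadic_cube k v = cbox (2 powr - of_int k *\<^sub>R v) (2 powr - of_int k *\<^sub>R v + 2 powr - of_int k *\<^sub>R One)"
  by (simp add: dyadic_cube_def scaleR_add_right)

lemma dyadic_cube_in_sets [simp]: "dyadic_cube k v \<in> sets lebesgue"
  by (simp add: dyadic_cube_def)

lemma lmeas_translate_dyadic_cube:
  "lmeas ((+) a ` dyadic_cube k v :: 'a::euclidean_space set) = ennreal ((2 powr - of_int k) ^ DIM('a))"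
proof -
  define c where "c = a + 2 powr - of_int k *\<^sub>R v"
  have "(+) a ` dyadic_cube k v = cbox c (c + 2 powr - of_int k *\<^sub>R One)"
    by (simp add: dyadic_cube_eq_cbox cbox_translation c_def add.assoc)
  then show ?thesis
    using emeasure_cbox_cube[of "2 powr - of_int k" c] by (simp add: outer_measure_of_eq)
qed

lemma lmeas_dyadic_cube:
  "lmeas (dyadic_cube k v :: 'a::euclidean_space set) = ennreal ((2 powr - of_int k) ^ DIM('a))"
  using lmeas_translate_dyadic_cube[of 0 k v] by simp

lemma emeasure_UN_dyadic_cubes_le:
  assumes "finite I"
  shows "emeasure lebesgue (\<Union>i\<in>I. dyadic_cube k (c i) :: 'a::euclidean_space set)
           \<le> ennreal (real (card I) * (2 powr - of_int k) ^ DIM('a))"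
proof -
  have "emeasure lebesgue (\<Union>i\<in>I. dyadic_cube k (c i) :: 'a set)
        \<le> (\<Sum>i\<in>I. emeasure lebesgue (dyadic_cube k (c i)))"
    using assms by (intro emeasure_subadditive_finite) auto
  also have "\<dots> = ennreal (real (card I) * (2 powr - of_int k) ^ DIM('a))"
    by (simp add: outer_measure_of_eq[symmetric] lmeas_dyadic_cube ennreal_of_nat_eq_real_of_nat ennreal_mult)
  finally show ?thesis .
qed

lemma lmeas_le_inter_plus_emeasure:
  assumes "W \<subseteq> X \<union> R" "R \<in> sets lebesgue"
  shows "lmeas W \<le> lmeas (W \<inter> X) + emeasure lebesgue R"
proof -
  obtain E where E: "E \<in> sets lebesgue" "W \<inter> X \<subseteq> E" "lmeas (W \<inter> X) = emeasure lebesgue E"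
    using outer_measure_of_attain[of "W \<inter> X" lebesgue] by auto
  have "lmeas W \<le> lmeas (E \<union> R)" using assms(1) E(2) by (intro outer_measure_of_mono) blast
  also have "\<dots> = emeasure lebesgue (E \<union> R)"
    using E(1) assms(2) by (intro outer_measure_of_eq) simp
  also have "\<dots> \<le> emeasure lebesgue E + emeasure lebesgue R"
    using E(1) assms(2) by (rule emeasure_subadditive)
  finally show ?thesis using E(3) by simp
qed

section \<open>Corner cubes and the sumset\<close>

text \<open>The \<open>2\<^sup>d\<close> cubes of \<open>D\<^sub>k\<close> having \<open>2\<^sup>-\<^sup>k p\<close> as a corner, for \<open>p \<in> S\<close>.\<close>
definition corner_cubes :: "int \<Rightarrow> 'a::euclidean_space set \<Rightarrow> 'a set" where
  "corner_cubes k S = (\<Union>(p, e)\<in>S \<times> lattice_box (-1) 0. dyadic_cube k (p + e))"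

lemma corner_cubes_eq_Union_dyadic_cubes:
  assumes "S \<subseteq> int_lattice"
  shows "\<exists>F \<subseteq> dyadic_cubes k. corner_cubes k S = \<Union>F"
proof (intro exI conjI)
  let ?F = "(\<lambda>(p, e). dyadic_cube k (p + e)) ` (S \<times> lattice_box (-1) 0)"
  show "?F \<subseteq> dyadic_cubes k"
  proof (rule image_subsetI, clarify)
    fix p e assume "p \<in> S" "e \<in> (lattice_box (-1) 0 :: 'a set)"
    then have "p + e \<in> int_lattice"
      using assms lattice_box_subset_int_lattice by (blast intro: int_lattice_add)
    then show "dyadic_cube k (p + e) \<in> dyadic_cubes k" unfolding dyadic_cubes_def by blast
  qed
  show "corner_cubes k S = \<Union>?F" unfolding corner_cubes_def by simp
qed

lemma lmeas_corner_cubes_le: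
  fixes S :: "'a::euclidean_space set"
  assumes "finite S"
  shows "lmeas (corner_cubes k S) \<le> ennreal (2 ^ DIM('a) * real (card S) * (2 powr - of_int k) ^ DIM('a))"
proof -
  let ?E = "lattice_box (-1) 0 :: 'a set"
  have eq: "corner_cubes k S = (\<Union>i\<in>S \<times> ?E. dyadic_cube k (fst i + snd i))"
    unfolding corner_cubes_def by (simp add: case_prod_beta)
  have "card (S \<times> ?E) \<le> card S * 2 ^ DIM('a)"
    using card_lattice_box_le[of "-1" 0, where 'a='a] by (simp add: card_cartesian_product)
  then have "real (card (S \<times> ?E)) \<le> real (card S * 2 ^ DIM('a))"
    by (simp only: of_nat_le_iff)
  then have card: "real (card (S \<times> ?E)) \<le> 2 ^ DIM('a) * real (card S)"
    by (simp add: mult.commute)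
  have "corner_cubes k S \<in> sets lebesgue"
    unfolding eq using assms by (intro sets.finite_UN) simp_all
  then have "lmeas (corner_cubes k S) = emeasure lebesgue (corner_cubes k S)"
    by (rule outer_measure_of_eq)
  also have "\<dots> \<le> ennreal (real (card (S \<times> ?E)) * (2 powr - of_int k) ^ DIM('a))"
    unfolding eq using assms by (intro emeasure_UN_dyadic_cubes_le) simp
  also have "\<dots> \<le> ennreal (2 ^ DIM('a) * real (card S) * (2 powr - of_int k) ^ DIM('a))"
    using card by (intro ennreal_leI mult_right_mono) simp_all
  finally show ?thesis .
qed

lemma corner_cubes_subset_dyadic_cube4:
  fixes v :: "'a::euclidean_space"
  assumes scale: "2 powr - of_int k * real n = 2 powr - of_int k0" and "2 \<le> n"
    and S: "S \<subseteq> lattice_box (- int n) (2 * int n)"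
  shows "corner_cubes k ((+) (real n *\<^sub>R v) ` S) \<subseteq> dyadic_cube4 k0 v"
proof
  define \<tau> :: real where "\<tau> = 2 powr - of_int k"
  define s :: real where "s = 2 powr - of_int k0"
  have \<tau>: "\<tau> > 0" by (simp add: \<tau>_def)
  fix z assume "z \<in> corner_cubes k ((+) (real n *\<^sub>R v) ` S)"
  then obtain p e where p: "p \<in> S" and e: "e \<in> lattice_box (-1) 0"
    and z: "z \<in> dyadic_cube k (real n *\<^sub>R v + p + e)"
    by (auto simp: corner_cubes_def add.assoc)
  have "(s *\<^sub>R (v - (3/2) *\<^sub>R One)) \<bullet> b \<le> z \<bullet> b \<and> z \<bullet> b \<le> (s *\<^sub>R (v + (5/2) *\<^sub>R One)) \<bullet> b"
    if b: "b \<in> Basis" for b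
  proof -
    have "- real n \<le> p \<bullet> b" "p \<bullet> b \<le> 2 * real n" "-1 \<le> e \<bullet> b" "e \<bullet> b \<le> 0"
      using p e S b by (auto simp: lattice_box_def)
    moreover have "\<tau> * (real n * (v \<bullet> b) + p \<bullet> b + e \<bullet> b) \<le> z \<bullet> b"
      "z \<bullet> b \<le> \<tau> * (real n * (v \<bullet> b) + p \<bullet> b + e \<bullet> b + 1)"
      using z b by (auto simp: dyadic_cube_def \<tau>_def mem_box inner_add_left)
    moreover have "\<tau> * (real n * (v \<bullet> b - 3/2)) \<le> \<tau> * (real n * (v \<bullet> b) + p \<bullet> b + e \<bullet> b)"
      "\<tau> * (real n * (v \<bullet> b) + p \<bullet> b + e \<bullet> b + 1) \<le> \<tau> * (real n * (v \<bullet> b + 5/2))"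
      using calculation(1-4) \<tau> \<open>2 \<le> n\<close> by (intro mult_left_mono, simp add: algebra_simps, simp)+
    moreover have "s = \<tau> * real n" using scale by (simp add: s_def \<tau>_def)
    ultimately show ?thesis using b by (simp add: inner_diff_left inner_add_left mult.assoc)
  qed
  then show "z \<in> dyadic_cube4 k0 v"
    by (simp add: dyadic_cube4_def mem_box s_def)
qed

definition uncovered :: "'g::ab_group_add set \<Rightarrow> 'g set \<Rightarrow> 'g set \<Rightarrow> 'g set" where
  "uncovered S Y U = {u \<in> U. \<forall>y\<in>Y. u - y \<notin> S}"

lemma finite_uncovered: "finite U \<Longrightarrow> finite (uncovered S Y U)"
  by (simp add: uncovered_def)

text \<open>With \<open>\<tau> = 2\<^sup>-\<^sup>k\<close> and \<open>t\<close> the cell of \<open>a\<^sub>0\<close>, a point \<open>z\<close> of \<open>a\<^sub>0 + Q\<close> lies in the cell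
  \<open>n v + u\<close> with \<open>u \<in> t + {0..n}\<^sup>d\<close>. If \<open>u - y \<in> S\<close> for the cell \<open>y\<close> of some \<open>x \<in> A\<close>, then the
  cell of \<open>z - x\<close> is a corner of \<open>n v + (u - y)\<close>, so \<open>z - x\<close> lies in \<open>B\<close>.\<close>
lemma translated_cube_subset_sumset:
  fixes A S Y :: "'a::euclidean_space set" and k :: int
  defines "\<tau> \<equiv> 2 powr - of_int k"
  assumes scale: "\<tau> * real n = 2 powr - of_int k0" and v: "v \<in> int_lattice"
    and Y: "Y \<subseteq> grid_cell \<tau> ` A"
  shows "(+) a0 ` dyadic_cube k0 v \<subseteq> set_plus A (corner_cubes k ((+) (real n *\<^sub>R v) ` S))
           \<union> (\<Union>u\<in>uncovered S Y ((+) (grid_cell \<tau> a0) ` lattice_box 0 (int n)).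
                 dyadic_cube k (real n *\<^sub>R v + u))"
    (is "_ \<subseteq> ?sum \<union> ?rest")
proof
  fix z assume "z \<in> (+) a0 ` dyadic_cube k0 v"
  then obtain q where q: "q \<in> dyadic_cube k0 v" and z: "z = a0 + q" by auto
  define u where "u = grid_cell \<tau> z - real n *\<^sub>R v"
  have z_cube: "z \<in> dyadic_cube k (real n *\<^sub>R v + u)"
    using mem_dyadic_cube_grid_cell[of z k] by (simp add: u_def \<tau>_def)
  have "u - grid_cell \<tau> a0 \<in> lattice_box 0 (int n)"
    using grid_cell_add_mem_lattice_box[of \<tau> v q n a0] q v scale
    by (simp add: \<tau>_def u_def z dyadic_cube_def)
  then have u: "u \<in> (+) (grid_cell \<tau> a0) ` lattice_box 0 (int n)"
    by (intro image_eqI[of _ _ "u - grid_cell \<tau> a0"]) simp_all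
  show "z \<in> ?sum \<union> ?rest"
  proof (cases "u \<in> uncovered S Y ((+) (grid_cell \<tau> a0) ` lattice_box 0 (int n))")
    case True
    then show ?thesis using z_cube by blast
  next
    case False
    then obtain x where x: "x \<in> A" "grid_cell \<tau> x \<in> Y" and uS: "u - grid_cell \<tau> x \<in> S"
      using u Y by (auto simp: uncovered_def)
    define e where "e = grid_cell \<tau> (z - x) - (grid_cell \<tau> z - grid_cell \<tau> x)"
    have e: "e \<in> lattice_box (-1) 0"
      unfolding e_def by (rule grid_cell_diff_mem_lattice_box)
    have "z - x \<in> dyadic_cube k (real n *\<^sub>R v + (u - grid_cell \<tau> x) + e)"
      using mem_dyadic_cube_grid_cell[of "z - x" k] by (simp add: e_def u_def \<tau>_def)
    then have "z - x \<in> corner_cubes k ((+) (real n *\<^sub>R v) ` S)"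
      using uS e unfolding corner_cubes_def by blast
    then have "z \<in> ?sum"
      using x(1) unfolding set_plus_def by (intro CollectI exI[of _ x] exI[of _ "z - x"]) simp
    then show ?thesis by blast
  qed
qed

lemma lmeas_translated_cube_le:
  fixes A S Y :: "'a::euclidean_space set" and k :: int
  defines "\<tau> \<equiv> 2 powr - of_int k"
  assumes scale: "\<tau> * real n = 2 powr - of_int k0" and v: "v \<in> int_lattice"
    and Y: "Y \<subseteq> grid_cell \<tau> ` A"
  shows "ennreal ((2 powr - of_int k0) ^ DIM('a))
           \<le> lmeas ((+) a0 ` dyadic_cube k0 v \<inter> set_plus A (corner_cubes k ((+) (real n *\<^sub>R v) ` S)))
             + ennreal (real (card (uncovered S Y ((+) (grid_cell \<tau> a0) ` lattice_box 0 (int n))))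
                        * \<tau> ^ DIM('a))"
proof -
  let ?U = "uncovered S Y ((+) (grid_cell \<tau> a0) ` lattice_box 0 (int n))"
  have fin: "finite ?U" by (simp add: finite_uncovered)
  have "ennreal ((2 powr - of_int k0) ^ DIM('a)) = lmeas ((+) a0 ` dyadic_cube k0 v)"
    by (rule lmeas_translate_dyadic_cube[symmetric])
  also have "\<dots> \<le> lmeas ((+) a0 ` dyadic_cube k0 v \<inter> set_plus A (corner_cubes k ((+) (real n *\<^sub>R v) ` S)))
             + emeasure lebesgue (\<Union>u\<in>?U. dyadic_cube k (real n *\<^sub>R v + u))"
    using translated_cube_subset_sumset[OF scale[unfolded \<tau>_def] v Y[unfolded \<tau>_def]] fin
    unfolding \<tau>_def by (intro lmeas_le_inter_plus_emeasure) auto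
  also have "\<dots> \<le> lmeas ((+) a0 ` dyadic_cube k0 v \<inter> set_plus A (corner_cubes k ((+) (real n *\<^sub>R v) ` S)))
             + ennreal (real (card ?U) * \<tau> ^ DIM('a))"
    using emeasure_UN_dyadic_cubes_le[OF fin] unfolding \<tau>_def by (rule add_left_mono)
  finally show ?thesis .
qed

section \<open>Random colourings\<close>

lemma greedy_independent_subset:
  fixes V :: "'g set" and R :: "'g \<Rightarrow> 'g \<Rightarrow> bool"
  assumes "finite V" "\<And>u w. R u w \<Longrightarrow> R w u"
    and "\<And>u. u \<in> V \<Longrightarrow> card {w \<in> V. w \<noteq> u \<and> R u w} \<le> \<Delta>"
    and "(\<Delta> + 1) * a \<le> card V"
  shows "\<exists>T\<subseteq>V. card T = a \<and> (\<forall>u\<in>T. \<forall>w\<in>T. u \<noteq> w \<longrightarrow> \<not> R u w)"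
  using assms(1,3,4)
proof (induction a arbitrary: V)
  case 0
  then show ?case by (intro exI[of _ "{}"]) auto
next
  case (Suc a)
  then obtain x where x: "x \<in> V" by fastforce
  define N where "N = insert x {w \<in> V. w \<noteq> x \<and> R x w}"
  define V' where "V' = V - N"
  have "card N \<le> \<Delta> + 1"
    using Suc.prems(1) Suc.prems(2)[OF x] by (simp add: N_def card_insert_if)
  moreover have "card V' = card V - card N"
    unfolding V'_def using Suc.prems(1) x by (intro card_Diff_subset) (auto simp: N_def)
  ultimately have "(\<Delta> + 1) * a \<le> card V'" using Suc.prems(3) by (simp add: algebra_simps)
  moreover have "card {w \<in> V'. w \<noteq> u \<and> R u w} \<le> \<Delta>" if "u \<in> V'" for u
    using that Suc.prems(1,2) card_mono[of "{w \<in> V. w \<noteq> u \<and> R u w}" "{w \<in> V'. w \<noteq> u \<and> R u w}"]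
    by (force simp: V'_def)
  moreover have "finite V'" using Suc.prems(1) by (simp add: V'_def)
  ultimately obtain T where T: "T \<subseteq> V'" "card T = a" "\<forall>u\<in>T. \<forall>w\<in>T. u \<noteq> w \<longrightarrow> \<not> R u w"
    using Suc.IH by blast
  have "x \<notin> T" "finite T" using T(1) \<open>finite V'\<close> by (auto simp: V'_def N_def intro: finite_subset)
  then show ?case
    using T x assms(2) by (intro exI[of _ "insert x T"]) (auto simp: V'_def N_def)
qed

text \<open>Greedy choice: each translate \<open>u - Y\<close> meets at most \<open>N\<^sup>2\<close> others.\<close>
lemma disjoint_translates_in_uncovered:
  fixes Y U :: "'g::ab_group_add set"
  assumes "finite U" "finite Y" "card Y = N" "(N * N + 1) * a \<le> card (uncovered S Y U)"
  shows "\<exists>T \<subseteq> uncovered S Y U. card T = a \<and> disjoint_family_on (\<lambda>u. (\<lambda>y. u - y) ` Y) T"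
proof -
  define R where "R u w \<longleftrightarrow> (\<lambda>y. u - y) ` Y \<inter> (\<lambda>y. w - y) ` Y \<noteq> {}" for u w
  have "card {w \<in> uncovered S Y U. w \<noteq> u \<and> R u w} \<le> N * N" for u
  proof -
    have "{w \<in> uncovered S Y U. w \<noteq> u \<and> R u w} \<subseteq> (\<lambda>(y, y'). u - y + y') ` (Y \<times> Y)"
    proof
      fix w assume "w \<in> {w \<in> uncovered S Y U. w \<noteq> u \<and> R u w}"
      then obtain y y' where "y \<in> Y" "y' \<in> Y" "u - y = w - y'" by (auto simp: R_def)
      then show "w \<in> (\<lambda>(y, y'). u - y + y') ` (Y \<times> Y)"
        by (intro image_eqI[of _ _ "(y, y')"]) (simp_all add: algebra_simps)
    qed
    then have "card {w \<in> uncovered S Y U. w \<noteq> u \<and> R u w} \<le> card (Y \<times> Y)"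
      using assms(2) card_image_le[of "Y \<times> Y" "\<lambda>(y, y'). u - y + y'"]
      by (meson card_mono finite_SigmaI finite_imageI order_trans)
    then show ?thesis using assms(3) by (simp add: card_cartesian_product)
  qed
  moreover have "finite (uncovered S Y U)" using assms(1) by (simp add: uncovered_def)
  ultimately obtain T where "T \<subseteq> uncovered S Y U" "card T = a" "\<forall>u\<in>T. \<forall>w\<in>T. u \<noteq> w \<longrightarrow> \<not> R u w"
    using greedy_independent_subset[of "uncovered S Y U" R "N * N" a] assms(4)
    by (auto simp: R_def)
  then show ?thesis by (auto simp: disjoint_family_on_def R_def)
qed

lemma card_PiE_restricted:
  assumes "finite P" "D \<subseteq> P"
  shows "card {f \<in> PiE P (\<lambda>_. {..<K::nat}). \<forall>p\<in>D. f p \<in> C}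
           = card ({..<K} \<inter> C) ^ card D * K ^ (card P - card D)"
proof -
  have "{f \<in> PiE P (\<lambda>_. {..<K}). \<forall>p\<in>D. f p \<in> C} = PiE P (\<lambda>p. if p \<in> D then {..<K} \<inter> C else {..<K})"
    using assms(2) by (auto simp: PiE_def Pi_def)
  then have "card {f \<in> PiE P (\<lambda>_. {..<K}). \<forall>p\<in>D. f p \<in> C}
      = (\<Prod>p\<in>P. card (if p \<in> D then {..<K} \<inter> C else {..<K}))"
    using assms(1) by (simp add: card_PiE)
  also have "\<dots> = (\<Prod>p\<in>P \<inter> D. card ({..<K} \<inter> C)) * (\<Prod>p\<in>P - D. card {..<K})"
    using assms(1) by (simp add: prod.If_cases if_distrib Diff_eq)
  also have "\<dots> = card ({..<K} \<inter> C) ^ card D * K ^ (card P - card D)"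
    using assms by (simp add: Int_absorb1 card_Diff_subset finite_subset)
  finally show ?thesis .
qed

text \<open>Markov's inequality: a uniformly random \<open>K\<close>-colouring of \<open>P\<close> has \<open>card P / K\<close> zeros on
  average.\<close>
lemma card_colorings_many_zeros_le:
  assumes "finite P" "K > 0"
  shows "2 * card {f \<in> PiE P (\<lambda>_. {..<K}). 2 * card P < K * card {p \<in> P. f p = 0}} \<le> K ^ card P"
proof -
  define F where "F = PiE P (\<lambda>_. {..<K})"
  define Big where "Big = {f \<in> F. 2 * card P < K * card {p \<in> P. f p = 0}}"
  have "finite F" using assms(1) by (simp add: F_def finite_PiE)
  have zeros: "(\<Sum>f\<in>F. card {p \<in> P. f p = 0}) * K = card P * K ^ card P"
  proof -
    have "(\<Sum>f\<in>F. card {p \<in> P. f p = 0}) = (\<Sum>f\<in>F. \<Sum>p\<in>P. if f p = 0 then 1 else 0)"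
      using assms(1) by (intro sum.cong refl) (simp add: sum.If_cases Int_def conj_commute)
    also have "\<dots> = (\<Sum>p\<in>P. \<Sum>f\<in>F. if f p = 0 then 1 else 0)" by (rule sum.swap)
    also have "\<dots> = (\<Sum>p\<in>P. card {f \<in> F. f p = 0})"
      using \<open>finite F\<close> by (intro sum.cong refl) (simp add: sum.If_cases Int_def conj_commute)
    also have "\<dots> = (\<Sum>p\<in>P. K ^ (card P - 1))"
    proof (intro sum.cong refl)
      fix p assume "p \<in> P"
      then have "card {f \<in> F. \<forall>q\<in>{p}. f q \<in> {0}} = K ^ (card P - 1)"
        unfolding F_def using assms by (subst card_PiE_restricted) (auto simp: lessThan_Suc_eq_insert_0)
      then show "card {f \<in> F. f p = 0} = K ^ (card P - 1)" by simp
    qed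
    finally show ?thesis
      using assms by (cases "card P") (simp_all add: algebra_simps)
  qed
  have "card Big * (2 * card P) \<le> (\<Sum>f\<in>Big. K * card {p \<in> P. f p = 0})"
    using sum_mono[of Big "\<lambda>_. 2 * card P" "\<lambda>f. K * card {p \<in> P. f p = 0}"] by (simp add: Big_def)
  also have "\<dots> \<le> (\<Sum>f\<in>F. K * card {p \<in> P. f p = 0})"
    using \<open>finite F\<close> by (intro sum_mono2) (auto simp: Big_def)
  also have "\<dots> = card P * K ^ card P"
    using zeros by (simp add: sum_distrib_left mult.commute)
  finally have "2 * card Big * card P \<le> K ^ card P * card P" by (simp add: mult_ac)
  then show ?thesis
    using assms by (cases "P = {}") (simp_all add: Big_def F_def card_gt_0_iff)
qed

lemma card_colorings_nonzero_on:
  assumes "finite P" "D \<subseteq> P" "K > 0"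
  shows "real (card {f \<in> PiE P (\<lambda>_. {..<K}). \<forall>p\<in>D. f p \<in> - {0}})
           = real K ^ card P * (real (K - 1) / real K) ^ card D"
proof -
  have "card {f \<in> PiE P (\<lambda>_. {..<K}). \<forall>p\<in>D. f p \<in> - {0}}
      = card ({..<K} \<inter> - {0}) ^ card D * K ^ (card P - card D)"
    by (rule card_PiE_restricted[OF assms(1,2)])
  also have "card ({..<K} \<inter> - {0}) = K - 1"
    using assms(3) by (simp add: Diff_eq[symmetric])
  finally have "card {f \<in> PiE P (\<lambda>_. {..<K}). \<forall>p\<in>D. f p \<in> - {0}} = (K - 1) ^ card D * K ^ (card P - card D)" .
  moreover have "real K ^ card P = real K ^ (card P - card D) * real K ^ card D"
    using card_mono[OF assms(1,2)] by (simp flip: power_add)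
  ultimately show ?thesis
    using assms(3) by (simp add: power_divide)
qed

text \<open>Union bound over the \<open>a\<close>-sets \<open>T\<close> of disjoint translates: a colouring that leaves
  \<open>(N\<^sup>2 + 1) a\<close> points of \<open>U\<close> uncovered by its zero set avoids \<open>0\<close> on the \<open>a N\<close> points of some
  \<open>T - Y\<close>, and each such event has probability \<open>((K - 1) / K)\<^sup>a\<^sup>N\<close>.\<close>
lemma card_colorings_many_uncovered_le:
  fixes P Y U :: "'g::ab_group_add set"
  assumes "finite P" "K > 0" "finite Y" "card Y = N" "finite U" "card U \<le> L"
    and UY: "\<forall>u\<in>U. \<forall>y\<in>Y. u - y \<in> P"
  shows "real (card {f \<in> PiE P (\<lambda>_. {..<K}). (N * N + 1) * a \<le> card (uncovered {p \<in> P. f p = 0} Y U)})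
           \<le> real (L choose a) * (real K ^ card P * (real (K - 1) / real K) ^ (a * N))"
proof -
  define F where "F = PiE P (\<lambda>_. {..<K})"
  define blocks where "blocks T = (\<Union>u\<in>T. (\<lambda>y. u - y) ` Y)" for T
  define Ts where "Ts = {T. T \<subseteq> U \<and> card T = a \<and> disjoint_family_on (\<lambda>u. (\<lambda>y. u - y) ` Y) T}"
  define G where "G T = {f \<in> F. \<forall>p\<in>blocks T. f p \<in> - {0}}" for T
  have bad: "{f \<in> F. (N * N + 1) * a \<le> card (uncovered {p \<in> P. f p = 0} Y U)} \<subseteq> (\<Union>T\<in>Ts. G T)"
  proof clarify
    fix f assume f: "f \<in> F" and many: "(N * N + 1) * a \<le> card (uncovered {p \<in> P. f p = 0} Y U)"
    obtain T where T: "T \<subseteq> uncovered {p \<in> P. f p = 0} Y U" "card T = a"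
      "disjoint_family_on (\<lambda>u. (\<lambda>y. u - y) ` Y) T"
      using disjoint_translates_in_uncovered[OF assms(5,3,4) many] by blast
    then have "T \<in> Ts" by (auto simp: Ts_def uncovered_def)
    moreover have "f \<in> G T"
      using T(1) UY f by (fastforce simp: G_def blocks_def uncovered_def)
    ultimately show "f \<in> (\<Union>T\<in>Ts. G T)" by blast
  qed
  have finG: "finite (\<Union>T\<in>Ts. G T)"
    by (rule finite_subset[of _ F]) (auto simp: G_def F_def finite_PiE assms(1))
  have "finite Ts" using assms(5) by (simp add: Ts_def)
  have "card {f \<in> F. (N * N + 1) * a \<le> card (uncovered {p \<in> P. f p = 0} Y U)}
      \<le> card (\<Union>T\<in>Ts. G T)"
    using finG bad by (rule card_mono)
  also have "\<dots> \<le> (\<Sum>T\<in>Ts. card (G T))"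
    using \<open>finite Ts\<close> by (rule card_UN_le)
  finally have "real (card {f \<in> F. (N * N + 1) * a \<le> card (uncovered {p \<in> P. f p = 0} Y U)})
      \<le> (\<Sum>T\<in>Ts. real (card (G T)))"
    by (simp add: of_nat_sum[symmetric] del: of_nat_sum)
  also have "\<dots> \<le> (\<Sum>T\<in>Ts. real K ^ card P * (real (K - 1) / real K) ^ (a * N))"
  proof (intro sum_mono)
    fix T assume T: "T \<in> Ts"
    then have "finite T" "T \<subseteq> U" using assms(5) by (auto simp: Ts_def intro: finite_subset)
    have sub: "blocks T \<subseteq> P" using T UY by (auto simp: Ts_def blocks_def)
    have "card ((\<lambda>y. u - y) ` Y) = N" for u
      using assms(4) by (subst card_image) (auto simp: inj_on_def)
    then have "card (blocks T) = a * N"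
      using T \<open>finite T\<close> assms(3) by (simp add: blocks_def Ts_def card_UN_disjoint')
    then show "real (card (G T)) \<le> real K ^ card P * (real (K - 1) / real K) ^ (a * N)"
      using card_colorings_nonzero_on[OF assms(1) sub assms(2)] by (simp add: G_def F_def)
  qed
  also have "\<dots> \<le> real (L choose a) * (real K ^ card P * (real (K - 1) / real K) ^ (a * N))"
  proof -
    have "card Ts \<le> card {T. T \<subseteq> U \<and> card T = a}" using assms(5) by (intro card_mono) (auto simp: Ts_def)
    also have "\<dots> \<le> L choose a" using assms(5,6) by (simp add: n_subsets binomial_right_mono)
    finally show ?thesis by (simp add: mult_right_mono)
  qed
  finally show ?thesis by (simp add: F_def)
qed

text \<open>Fewer than half of all \<open>K\<close>-colourings of \<open>P\<close> have too many zeros, and fewer than half leave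
  too many points uncovered in some configuration of \<open>C\<close>; \<open>S\<close> is the zero set of any other one.\<close>
lemma exists_sparse_subset_few_uncovered:
  fixes P :: "'g::ab_group_add set" and C :: "('g set \<times> 'g set) set"
  assumes "finite P" "finite C" "K > 0"
    and C: "\<And>Y U. (Y, U) \<in> C \<Longrightarrow>
              finite Y \<and> card Y = N \<and> finite U \<and> card U \<le> L \<and> (\<forall>u\<in>U. \<forall>y\<in>Y. u - y \<in> P)"
    and small: "real (card C) * real (L choose a) * (real (K - 1) / real K) ^ (a * N) < 1 / 2"
  shows "\<exists>S \<subseteq> P. K * card S \<le> 2 * card P \<and> (\<forall>(Y, U)\<in>C. card (uncovered S Y U) < (N * N + 1) * a)"
proof -
  define F where "F = PiE P (\<lambda>_. {..<K})"
  define Z where "Z f = {p \<in> P. f p = 0}" for f :: "'g \<Rightarrow> nat"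
  define Big where "Big = {f \<in> F. 2 * card P < K * card (Z f)}"
  define Bad where "Bad YU = {f \<in> F. (N * N + 1) * a \<le> card (uncovered (Z f) (fst YU) (snd YU))}" for YU
  have finF: "finite F" and cardF: "card F = K ^ card P"
    using assms(1) by (simp_all add: F_def finite_PiE card_PiE)
  have "2 * card Big \<le> card F"
    unfolding cardF unfolding Big_def F_def Z_def by (rule card_colorings_many_zeros_le[OF assms(1,3)])
  then have "real (2 * card Big) \<le> real (card F)" by (simp only: of_nat_le_iff)
  then have "2 * real (card Big) \<le> real (card F)" by simp
  moreover have "real (card (\<Union>YU\<in>C. Bad YU)) < real (card F) / 2"
  proof -
    have "real (card (\<Union>YU\<in>C. Bad YU)) \<le> (\<Sum>YU\<in>C. real (card (Bad YU)))"
      using card_UN_le[OF assms(2), of Bad] by (simp add: of_nat_sum[symmetric] del: of_nat_sum)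
    also have "\<dots> \<le> (\<Sum>YU\<in>C. real (L choose a) * (real K ^ card P * (real (K - 1) / real K) ^ (a * N)))"
    proof (intro sum_mono)
      fix YU assume "YU \<in> C"
      then obtain Y U where YU: "YU = (Y, U)" "(Y, U) \<in> C" by (cases YU) auto
      show "real (card (Bad YU)) \<le> real (L choose a) * (real K ^ card P * (real (K - 1) / real K) ^ (a * N))"
        using card_colorings_many_uncovered_le[OF assms(1,3), of Y N U L a] C[OF YU(2)]
        unfolding YU(1) Bad_def F_def Z_def by simp
    qed
    also have "\<dots> = real K ^ card P * (real (card C) * real (L choose a) * (real (K - 1) / real K) ^ (a * N))"
      by (simp add: mult_ac)
    also have "\<dots> < real (card F) / 2"
      using small assms(3) by (simp add: cardF)
    finally show ?thesis .
  qed
  ultimately have "card (Big \<union> (\<Union>YU\<in>C. Bad YU)) < card F"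
    using card_Un_le[of Big "\<Union>YU\<in>C. Bad YU"] by linarith
  moreover have "finite (Big \<union> (\<Union>YU\<in>C. Bad YU))"
    using finF by (rule finite_subset[rotated]) (auto simp: Big_def Bad_def)
  ultimately have "\<not> F \<subseteq> Big \<union> (\<Union>YU\<in>C. Bad YU)"
    using card_mono by (meson not_le)
  then obtain f where "f \<in> F" "f \<notin> Big" "f \<notin> (\<Union>YU\<in>C. Bad YU)" by blast
  then show ?thesis
    by (intro exI[of _ "Z f"]) (auto simp: Big_def Bad_def Z_def not_less)
qed

section \<open>Numerical estimates\<close>

lemma binomial_le_exp_pow:
  assumes "a > 0"
  shows "real (L choose a) \<le> (exp 1 * real L / real a) ^ a"
proof -
  have "real a ^ a / fact a \<le> exp (real a)"
  proof -
    have "(\<Sum>n\<in>{a}. real a ^ n /\<^sub>R fact n) \<le> (\<Sum>n. real a ^ n /\<^sub>R fact n)"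
      by (rule sum_le_suminf[OF summable_exp_generic]) auto
    then show ?thesis by (simp add: exp_def divide_inverse mult.commute)
  qed
  then have frac: "1 / fact a \<le> exp (real a) / real a ^ a"
    using assms by (simp add: field_simps)
  have "real ((L choose a) * fact a) \<le> real (L ^ a)"
    by (simp only: of_nat_le_iff binomial_fact_pow)
  then have "real (L choose a) \<le> real L ^ a / fact a"
    by (simp add: pos_le_divide_eq)
  also have "\<dots> = real L ^ a * (1 / fact a)" by simp
  also have "\<dots> \<le> real L ^ a * (exp (real a) / real a ^ a)"
    using frac by (rule mult_left_mono) simp
  also have "\<dots> = (exp 1 * real L / real a) ^ a"
    using exp_of_nat_mult[of a "1::real"] by (simp add: power_divide power_mult_distrib)
  finally show ?thesis .
qed

lemma binomial_times_power_le_half_pow: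
  fixes r :: real
  assumes "a > 0" "0 \<le> r" "exp 1 * real L * r ^ N \<le> real a / 2"
  shows "real (L choose a) * r ^ (a * N) \<le> (1 / 2) ^ a"
proof -
  have "real (L choose a) * r ^ (a * N) \<le> (exp 1 * real L / real a) ^ a * (r ^ N) ^ a"
    using binomial_le_exp_pow[OF assms(1), of L] assms(2)
    by (simp add: power_mult mult.commute[of a] mult_right_mono)
  also have "\<dots> = (exp 1 * real L / real a * r ^ N) ^ a"
    by (rule power_mult_distrib[symmetric])
  also have "\<dots> \<le> (1 / 2) ^ a"
    using assms by (intro power_mono) (simp_all add: field_simps)
  finally show ?thesis .
qed

lemma quadratic_times_power_tendsto_0:
  fixes r :: real
  assumes "0 < r" "r < 1"
  shows "(\<lambda>N. (real N * real N + 1) * r ^ N) \<longlonglongrightarrow> 0"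
proof -
  have "ln r < 0" using assms by simp
  then have "(\<lambda>N. (real N * real N + 1) * exp (real N * ln r)) \<longlonglongrightarrow> 0"
    by real_asymp
  then show ?thesis using assms by (simp add: exp_of_nat_mult)
qed

lemma eventually_poly_less_exp:
  fixes c :: real
  assumes "0 < c"
  shows "\<forall>\<^sub>F n in sequentially. 2 * (real n + 1) ^ p < 2 powr (c * real n)"
proof -
  have "(\<lambda>n. 2 * (real n + 1) ^ p / 2 powr (c * real n)) \<longlonglongrightarrow> 0"
    using assms by real_asymp
  then have "\<forall>\<^sub>F n in sequentially. 2 * (real n + 1) ^ p / 2 powr (c * real n) < 1"
    by (rule order_tendstoD) simp
  then show ?thesis by eventually_elim simp
qed

lemma binomial_times_power_le_powr:
  fixes \<epsilon> r D :: real and n d :: nat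
  defines "x \<equiv> \<epsilon> * real n ^ d / D"
  assumes "0 \<le> r" "0 < D" "1 \<le> n" "2 \<le> x"
    and r: "D * r ^ N \<le> \<epsilon> / (2 ^ (d + 3) * exp 1)"
  shows "real ((n + 1) ^ d choose nat \<lfloor>x\<rfloor>) * r ^ (nat \<lfloor>x\<rfloor> * N) \<le> 2 powr (- x / 2)"
proof -
  define a where "a = nat \<lfloor>x\<rfloor>"
  have a: "x / 2 \<le> real a" "0 < a" using \<open>2 \<le> x\<close> by (simp_all add: a_def) linarith+
  have "real ((n + 1) ^ d) \<le> 2 ^ d * real n ^ d"
    using \<open>1 \<le> n\<close> power_mono[of "real n + 1" "2 * real n" d] by (simp add: power_mult_distrib add.commute)
  then have "exp 1 * real ((n + 1) ^ d) * r ^ N \<le> exp 1 * (2 ^ d * real n ^ d) * (\<epsilon> / (2 ^ (d + 3) * exp 1) / D)"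
    using r \<open>0 < D\<close> \<open>0 \<le> r\<close> by (intro mult_mono) (simp_all add: pos_le_divide_eq mult_ac)
  also have "\<dots> = x / 8" by (simp add: x_def field_simps power_add)
  also have "\<dots> \<le> real a / 2" using a \<open>2 \<le> x\<close> by linarith
  finally have "real ((n + 1) ^ d choose a) * r ^ (a * N) \<le> (1 / 2) ^ a"
    by (rule binomial_times_power_le_half_pow[OF a(2) \<open>0 \<le> r\<close>])
  also have "\<dots> = 2 powr (- real a)"
    by (simp add: powr_minus powr_realpow power_one_over inverse_eq_divide)
  also have "\<dots> \<le> 2 powr (- x / 2)" using a by simp
  finally show ?thesis by (simp add: a_def)
qed

lemma eventually_union_bound_small:
  fixes \<epsilon> r :: real and d N :: nat
  defines "a \<equiv> \<lambda>n. nat \<lfloor>\<epsilon> * real n ^ d / (real N * real N + 1)\<rfloor>"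
  assumes "0 < \<epsilon>" "0 \<le> r" "1 \<le> d"
    and r: "(real N * real N + 1) * r ^ N \<le> \<epsilon> / (2 ^ (d + 3) * exp 1)"
  shows "\<forall>\<^sub>F n in sequentially.
           real ((n + 1) ^ (d * (N + 1))) * real ((n + 1) ^ d choose a n) * r ^ (a n * N) < 1 / 2"
proof -
  define D where "D = real N * real N + 1"
  have D: "0 < D" by (simp add: D_def add_nonneg_pos)
  have ge: "\<forall>\<^sub>F n in sequentially. M \<le> real n" for M
    using filterlim_real_sequentially unfolding filterlim_at_top by blast
  have "\<forall>\<^sub>F n in sequentially. 1 \<le> real n \<and> 2 * D / \<epsilon> \<le> real n
          \<and> 2 * (real n + 1) ^ (d * (N + 1)) < 2 powr (\<epsilon> / (2 * D) * real n)"
    using D \<open>0 < \<epsilon>\<close> by (intro eventually_conj ge eventually_poly_less_exp) simp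
  then show ?thesis
  proof eventually_elim
    case (elim n)
    define x where "x = \<epsilon> * real n ^ d / D"
    have "real n \<le> real n ^ d" using elim \<open>1 \<le> d\<close> by (intro self_le_power) auto
    then have "\<epsilon> * real n / D \<le> x" using \<open>0 < \<epsilon>\<close> D by (simp add: x_def divide_right_mono)
    moreover have "2 \<le> \<epsilon> * real n / D" using elim \<open>0 < \<epsilon>\<close> D by (simp add: field_simps)
    ultimately have x: "2 \<le> x" "\<epsilon> / (2 * D) * real n \<le> x / 2" by (simp_all add: field_simps)
    have "real ((n + 1) ^ d choose a n) * r ^ (a n * N) \<le> 2 powr (- x / 2)"
      using binomial_times_power_le_powr[of r D n \<epsilon> d] elim x(1) D r \<open>0 \<le> r\<close>
      by (simp add: a_def x_def D_def)
    also have "\<dots> \<le> 2 powr (- (\<epsilon> / (2 * D) * real n))" using x(2) by simp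
    finally have bound: "real ((n + 1) ^ d choose a n) * r ^ (a n * N) \<le> 2 powr (- (\<epsilon> / (2 * D) * real n))" .
    have "real ((n + 1) ^ (d * (N + 1))) * real ((n + 1) ^ d choose a n) * r ^ (a n * N)
        = real ((n + 1) ^ (d * (N + 1))) * (real ((n + 1) ^ d choose a n) * r ^ (a n * N))"
      by (rule mult.assoc)
    also have "\<dots> \<le> real ((n + 1) ^ (d * (N + 1))) * 2 powr (- (\<epsilon> / (2 * D) * real n))"
      using bound by (rule mult_left_mono) simp
    also have "\<dots> < 1 / 2"
      using elim by (simp add: powr_minus field_simps add.commute)
    finally show ?case .
  qed
qed

section \<open>A sparse lattice set\<close>

lemma lattice_box_add_diff:
  assumes "t \<in> lattice_box 0 (int n)" "w \<in> lattice_box 0 (int n)" "y \<in> lattice_box 0 (int n)"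
  shows "t + w - y \<in> lattice_box (- int n) (2 * int n)"
proof -
  have "- real n \<le> (t + w - y) \<bullet> b \<and> (t + w - y) \<bullet> b \<le> 2 * real n" if b: "b \<in> Basis" for b
  proof -
    have "0 \<le> t \<bullet> b" "t \<bullet> b \<le> real n" "0 \<le> w \<bullet> b" "w \<bullet> b \<le> real n" "0 \<le> y \<bullet> b" "y \<bullet> b \<le> real n"
      using assms b by (auto simp: lattice_box_def)
    then show ?thesis by (simp add: inner_add_left inner_diff_left)
  qed
  with assms show ?thesis by (simp add: lattice_box_def int_lattice_add int_lattice_diff)
qed

lemma card_translate_configurations_le:
  assumes "finite B"
  shows "card ((\<lambda>(Y, t). (Y, (+) t ` B)) ` ({Y. Y \<subseteq> B \<and> card Y = N} \<times> B)) \<le> card B ^ (N + 1)"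
proof -
  have "card ((\<lambda>(Y, t). (Y, (+) t ` B)) ` ({Y. Y \<subseteq> B \<and> card Y = N} \<times> B))
      \<le> card ({Y. Y \<subseteq> B \<and> card Y = N} \<times> B)"
    using assms by (intro card_image_le) simp
  also have "\<dots> = (card B choose N) * card B"
    using assms by (simp add: card_cartesian_product n_subsets)
  also have "\<dots> \<le> card B ^ N * card B"
    by (cases "N \<le> card B") (simp_all add: binomial_le_pow binomial_eq_0)
  finally show ?thesis by (simp add: mult.commute)
qed

lemma exists_lattice_subset_few_uncovered:
  fixes n N K a :: nat
  defines "B \<equiv> lattice_box 0 (int n) :: 'a::euclidean_space set"
  assumes "0 < K"
    and small: "real ((n + 1) ^ (DIM('a) * (N + 1))) * real ((n + 1) ^ DIM('a) choose a)
                  * (real (K - 1) / real K) ^ (a * N) < 1 / 2"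
  shows "\<exists>S \<subseteq> lattice_box (- int n) (2 * int n). K * card S \<le> 2 * (3 * n + 1) ^ DIM('a) \<and>
           (\<forall>Y t. Y \<subseteq> B \<longrightarrow> card Y = N \<longrightarrow> t \<in> B \<longrightarrow> card (uncovered S Y ((+) t ` B)) < (N * N + 1) * a)"
proof -
  define P where "P = (lattice_box (- int n) (2 * int n) :: 'a set)"
  define C where "C = (\<lambda>(Y, t). (Y, (+) t ` B)) ` ({Y. Y \<subseteq> B \<and> card Y = N} \<times> B)"
  have "nat (int n - 0 + 1) = n + 1" "nat (2 * int n - - int n + 1) = 3 * n + 1" by simp_all
  then have cardB: "card B \<le> (n + 1) ^ DIM('a)" and cardP: "card P \<le> (3 * n + 1) ^ DIM('a)"
    using card_lattice_box_le[of 0 "int n", where 'a='a] card_lattice_box_le[of "- int n" "2 * int n", where 'a='a]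
    unfolding B_def P_def by (simp_all only:)
  have "card C \<le> card B ^ (N + 1)"
    unfolding C_def by (rule card_translate_configurations_le) (simp add: B_def)
  also have "\<dots> \<le> ((n + 1) ^ DIM('a)) ^ (N + 1)" by (rule power_mono[OF cardB]) simp
  finally have "real (card C) \<le> real ((n + 1) ^ (DIM('a) * (N + 1)))"
    by (simp only: power_mult of_nat_le_iff)
  then have "real (card C) * (real ((n + 1) ^ DIM('a) choose a) * (real (K - 1) / real K) ^ (a * N))
      \<le> real ((n + 1) ^ (DIM('a) * (N + 1))) * (real ((n + 1) ^ DIM('a) choose a) * (real (K - 1) / real K) ^ (a * N))"
    by (rule mult_right_mono) simp
  also have "\<dots> < 1 / 2" using small by (simp only: mult.assoc)
  finally have few: "real (card C) * real ((n + 1) ^ DIM('a) choose a) * (real (K - 1) / real K) ^ (a * N) < 1 / 2"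
    by (simp only: mult.assoc)
  have configurations: "finite Y \<and> card Y = N \<and> finite U \<and> card U \<le> (n + 1) ^ DIM('a) \<and> (\<forall>u\<in>U. \<forall>y\<in>Y. u - y \<in> P)"
    if YU: "(Y, U) \<in> C" for Y U
  proof -
    obtain t where Y: "Y \<subseteq> B" "card Y = N" and t: "t \<in> B" and U: "U = (+) t ` B"
      using YU unfolding C_def by auto
    have "finite B" by (simp add: B_def)
    then have "finite Y" "finite U" "card U \<le> (n + 1) ^ DIM('a)"
      using Y(1) U cardB card_image_le[of B "(+) t"] by (auto intro: finite_subset)
    moreover have "u - y \<in> P" if "u \<in> U" "y \<in> Y" for u y
      using that U Y(1) t lattice_box_add_diff[of t n] by (auto simp: B_def P_def)
    ultimately show ?thesis using Y(2) by blast
  qed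
  have "finite P" "finite C" by (simp_all add: P_def C_def B_def)
  then have "\<exists>S\<subseteq>P. K * card S \<le> 2 * card P \<and> (\<forall>(Y, U)\<in>C. card (uncovered S Y U) < (N * N + 1) * a)"
    using \<open>0 < K\<close> configurations few by (intro exists_sparse_subset_few_uncovered) simp_all
  then obtain S where S: "S \<subseteq> P" "K * card S \<le> 2 * card P"
    and unc: "\<forall>(Y, U)\<in>C. card (uncovered S Y U) < (N * N + 1) * a"
    by blast
  have "K * card S \<le> 2 * (3 * n + 1) ^ DIM('a)" using S(2) cardP by linarith
  moreover have "card (uncovered S Y ((+) t ` B)) < (N * N + 1) * a"
    if "Y \<subseteq> B" "card Y = N" "t \<in> B" for Y t
    using unc that by (force simp: C_def)
  ultimately show ?thesis using S(1) unfolding P_def by blast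
qed

lemma sparse_card_bound:
  fixes c K n d :: nat and \<eta> :: real
  assumes "K * c \<le> 2 * (3 * n + 1) ^ d" "1 \<le> n" "2 * 8 ^ d / \<eta> \<le> real K" "0 < \<eta>"
  shows "2 ^ d * real c \<le> \<eta> * real n ^ d"
proof -
  have "real (K * c) \<le> real (2 * (3 * n + 1) ^ d)" using assms(1) by (simp only: of_nat_le_iff)
  then have "real K * real c \<le> 2 * (3 * real n + 1) ^ d" by (simp add: add.commute)
  then have "2 ^ d * (real K * real c) \<le> 2 ^ d * (2 * (3 * real n + 1) ^ d)"
    by (rule mult_left_mono) simp
  then have "real K * (2 ^ d * real c) \<le> 2 * (2 * (3 * real n + 1)) ^ d"
    by (simp only: power_mult_distrib mult_ac)
  also have "\<dots> \<le> 2 * (8 * real n) ^ d"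
    using assms(2) by (intro mult_left_mono power_mono) auto
  also have "\<dots> = (2 * 8 ^ d) * real n ^ d" by (simp add: power_mult_distrib)
  also have "\<dots> \<le> (\<eta> * real K) * real n ^ d"
    using assms(3,4) by (intro mult_right_mono) (simp_all add: pos_divide_le_eq mult.commute)
  finally have "real K * (2 ^ d * real c) \<le> real K * (\<eta> * real n ^ d)" by (simp add: mult_ac)
  moreover have "0 < 2 * 8 ^ d / \<eta>" using assms(4) by simp
  then have "0 < real K" using assms(3) by linarith
  ultimately show ?thesis by simp
qed

lemma mult_nat_floor_divide_le:
  fixes x c :: real
  assumes "0 < c" "0 \<le> x"
  shows "c * real (nat \<lfloor>x / c\<rfloor>) \<le> x"
proof -
  have "of_int \<lfloor>x / c\<rfloor> \<le> x / c" by (rule of_int_floor_le)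
  then have "c * of_int \<lfloor>x / c\<rfloor> \<le> x" by (simp only: pos_le_divide_eq[OF assms(1)] mult.commute)
  then show ?thesis using assms by simp
qed

definition good_lattice_set :: "real \<Rightarrow> real \<Rightarrow> nat \<Rightarrow> nat \<Rightarrow> 'a::euclidean_space set \<Rightarrow> bool" where
  "good_lattice_set \<eta> \<epsilon> N n S \<longleftrightarrow> S \<subseteq> lattice_box (- int n) (2 * int n) \<and>
     2 ^ DIM('a) * real (card S) \<le> \<eta> * real n ^ DIM('a) \<and>
     (\<forall>Y t. Y \<subseteq> lattice_box 0 (int n) \<longrightarrow> card Y = N \<longrightarrow> t \<in> lattice_box 0 (int n) \<longrightarrow>
        real (card (uncovered S Y ((+) t ` lattice_box 0 (int n)))) \<le> \<epsilon> * real n ^ DIM('a))"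

lemma sparse_lattice_set:
  fixes \<eta> \<epsilon> :: real
  assumes "0 < \<eta>" "0 < \<epsilon>"
  obtains N :: nat where "\<forall>\<^sub>F n in sequentially. \<exists>S :: 'a::euclidean_space set. good_lattice_set \<eta> \<epsilon> N n S"
proof -
  define d where "d = DIM('a)"
  have "1 \<le> d" by (simp add: d_def DIM_positive Suc_leI)
  define K :: nat where "K = nat \<lceil>2 * 8 ^ d / \<eta>\<rceil> + 1"
  have "0 < 2 * 8 ^ d / \<eta>" using assms by simp
  then have K: "2 * 8 ^ d / \<eta> \<le> real K" "1 < K"
    unfolding K_def by linarith+
  define r where "r = real (K - 1) / real K"
  have r: "0 < r" "r < 1" using K(2) by (simp_all add: r_def)
  have "0 < \<epsilon> / (2 ^ (d + 3) * exp 1)" using assms by simp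
  from order_tendstoD(2)[OF quadratic_times_power_tendsto_0[OF r] this]
  obtain N where N: "(real N * real N + 1) * r ^ N \<le> \<epsilon> / (2 ^ (d + 3) * exp 1)"
    by (metis (lifting) eventually_sequentially less_imp_le order.refl)
  define a where "a n = nat \<lfloor>\<epsilon> * real n ^ d / (real N * real N + 1)\<rfloor>" for n
  have "\<forall>\<^sub>F n in sequentially. 1 \<le> n \<and>
      real ((n + 1) ^ (d * (N + 1))) * real ((n + 1) ^ d choose a n) * r ^ (a n * N) < 1 / 2"
    using eventually_union_bound_small[OF assms(2) less_imp_le[OF r(1)] \<open>1 \<le> d\<close> N]
    unfolding a_def by (intro eventually_conj eventually_ge_at_top)
  then show ?thesis
  proof (rule that[OF eventually_mono], elim conjE)
    fix n :: nat
    assume "1 \<le> n" and "real ((n + 1) ^ (d * (N + 1))) * real ((n + 1) ^ d choose a n) * r ^ (a n * N) < 1 / 2"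
    then obtain S :: "'a set" where S: "S \<subseteq> lattice_box (- int n) (2 * int n)" "K * card S \<le> 2 * (3 * n + 1) ^ d"
      and unc: "\<forall>Y t. Y \<subseteq> lattice_box 0 (int n) \<longrightarrow> card Y = N \<longrightarrow> t \<in> lattice_box 0 (int n) \<longrightarrow>
                  card (uncovered S Y ((+) t ` lattice_box 0 (int n))) < (N * N + 1) * a n"
      using exists_lattice_subset_few_uncovered[of K n N "a n"] K(2) unfolding d_def r_def by auto
    have "(real N * real N + 1) * real (a n) \<le> \<epsilon> * real n ^ d"
      unfolding a_def using assms(2) by (intro mult_nat_floor_divide_le) (simp_all add: add_nonneg_pos)
    then have bound: "real ((N * N + 1) * a n) \<le> \<epsilon> * real n ^ d"
      by (simp only: of_nat_mult of_nat_add of_nat_1)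
    show "\<exists>S :: 'a set. good_lattice_set \<eta> \<epsilon> N n S"
      unfolding good_lattice_set_def d_def[symmetric]
    proof (intro exI[of _ S] conjI allI impI)
      show "S \<subseteq> lattice_box (- int n) (2 * int n)" by (fact S(1))
      show "2 ^ d * real (card S) \<le> \<eta> * real n ^ d"
        by (rule sparse_card_bound[OF S(2) \<open>1 \<le> n\<close> K(1) assms(1)])
      fix Y :: "'a set" and t :: 'a
      assume "Y \<subseteq> lattice_box 0 (int n)" "card Y = N" "t \<in> lattice_box 0 (int n)"
      then have "card (uncovered S Y ((+) t ` lattice_box 0 (int n))) < (N * N + 1) * a n"
        using unc by blast
      then have "real (card (uncovered S Y ((+) t ` lattice_box 0 (int n)))) < real ((N * N + 1) * a n)"
        by (simp only: of_nat_less_iff)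
      then show "real (card (uncovered S Y ((+) t ` lattice_box 0 (int n)))) \<le> \<epsilon> * real n ^ d"
        using bound by linarith
    qed
  qed
qed

lemma ennreal_diff_le_of_le_add:
  assumes "0 \<le> b" "ennreal a \<le> X + ennreal b"
  shows "ennreal (a - b) \<le> X"
proof (cases X)
  case (real x)
  then have "ennreal a \<le> ennreal (x + b)" using assms by (simp add: ennreal_plus)
  then have "a - b \<le> x" using real assms(1) by (subst (asm) ennreal_le_iff) auto
  then show ?thesis using real by (simp add: ennreal_leI)
qed simp

lemma lmeas_translated_cube_inter_sumset_ge:
  fixes S A :: "'a::euclidean_space set" and v :: 'a and k k0 :: int and n :: nat
  defines "\<tau> \<equiv> 2 powr - of_int k"
  assumes scale: "\<tau> * real n = 2 powr - of_int k0" and \<delta>: "real DIM('a) * \<tau> \<le> \<delta>" and v: "v \<in> int_lattice"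
    and good: "good_lattice_set \<eta> \<epsilon> N n S"
    and A: "A \<subseteq> cbox 0 (2 powr - of_int k0 *\<^sub>R One)" "N \<le> covering_number \<delta> A" "a0 \<in> A"
  shows "ennreal (1 - \<epsilon>) * lmeas (dyadic_cube k0 v)
           \<le> lmeas ((+) a0 ` dyadic_cube k0 v \<inter> set_plus A (corner_cubes k ((+) (real n *\<^sub>R v) ` S)))"
proof -
  have \<tau>: "\<tau> > 0" by (simp add: \<tau>_def)
  have cells: "grid_cell \<tau> ` A \<subseteq> lattice_box 0 (int n)"
    using \<tau> A scale by (intro grid_cells_subset_lattice_box) simp_all
  then have "finite (grid_cell \<tau> ` A)" by (rule finite_subset) simp
  then have "N \<le> card (grid_cell \<tau> ` A)"
    using covering_number_le_card_grid_cells[OF \<tau> \<delta>, of A] A by linarith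
  then obtain Y where Y: "Y \<subseteq> grid_cell \<tau> ` A" "card Y = N" by (meson obtain_subset_with_card_n)
  define U where "U = uncovered S Y ((+) (grid_cell \<tau> a0) ` lattice_box 0 (int n))"
  have "Y \<subseteq> lattice_box 0 (int n)" "grid_cell \<tau> a0 \<in> lattice_box 0 (int n)"
    using Y(1) cells A by auto
  then have "real (card U) \<le> \<epsilon> * real n ^ DIM('a)"
    using good Y(2) unfolding U_def good_lattice_set_def by blast
  then have bound: "real (card U) * \<tau> ^ DIM('a) \<le> \<epsilon> * (\<tau> * real n) ^ DIM('a)"
    using \<tau> by (simp add: power_mult_distrib mult_right_mono flip: mult.assoc)
  have "ennreal ((\<tau> * real n) ^ DIM('a))
      \<le> lmeas ((+) a0 ` dyadic_cube k0 v \<inter> set_plus A (corner_cubes k ((+) (real n *\<^sub>R v) ` S)))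
        + ennreal (real (card U) * \<tau> ^ DIM('a))"
    unfolding U_def \<tau>_def scale[unfolded \<tau>_def]
    by (rule lmeas_translated_cube_le[OF scale[unfolded \<tau>_def] v Y(1)[unfolded \<tau>_def]])
  then have "ennreal ((\<tau> * real n) ^ DIM('a) - real (card U) * \<tau> ^ DIM('a))
      \<le> lmeas ((+) a0 ` dyadic_cube k0 v \<inter> set_plus A (corner_cubes k ((+) (real n *\<^sub>R v) ` S)))"
    by (rule ennreal_diff_le_of_le_add[rotated]) (use \<tau> in simp)
  moreover have "ennreal (1 - \<epsilon>) * lmeas (dyadic_cube k0 v) = ennreal ((1 - \<epsilon>) * (\<tau> * real n) ^ DIM('a))"
    using \<tau> by (simp add: lmeas_dyadic_cube ennreal_mult'' flip: scale)
  moreover have "\<dots> \<le> ennreal ((\<tau> * real n) ^ DIM('a) - real (card U) * \<tau> ^ DIM('a))"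
    using bound by (intro ennreal_leI) (simp add: algebra_simps)
  ultimately show ?thesis by simp
qed

lemma corner_cubes_good_for_cube:
  fixes S :: "'a::euclidean_space set" and v :: 'a and k k0 :: int and n :: nat
  defines "\<tau> \<equiv> 2 powr - of_int k" and "B \<equiv> corner_cubes k ((+) (real n *\<^sub>R v) ` S)"
  assumes scale: "\<tau> * real n = 2 powr - of_int k0" and "2 \<le> n"
    and \<delta>: "real DIM('a) * \<tau> \<le> \<delta>" and v: "v \<in> int_lattice"
    and good: "good_lattice_set \<eta> \<epsilon> N n S"
  shows "B \<subseteq> dyadic_cube4 k0 v \<and> (\<exists>F. F \<subseteq> dyadic_cubes k \<and> B = \<Union>F)
         \<and> lmeas B \<le> ennreal \<eta> * lmeas (dyadic_cube k0 v)
         \<and> (\<forall>A a0. A \<subseteq> cbox 0 (2 powr - of_int k0 *\<^sub>R One) \<and> covering_number \<delta> A \<ge> N \<and> a0 \<in> A \<longrightarrow>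
              lmeas ((+) a0 ` dyadic_cube k0 v \<inter> set_plus A B) \<ge> ennreal (1 - \<epsilon>) * lmeas (dyadic_cube k0 v))"
proof -
  have S: "S \<subseteq> lattice_box (- int n) (2 * int n)" "2 ^ DIM('a) * real (card S) \<le> \<eta> * real n ^ DIM('a)"
    using good by (simp_all add: good_lattice_set_def)
  have \<tau>: "\<tau> > 0" by (simp add: \<tau>_def)
  have finS: "finite S" using S(1) by (rule finite_subset) simp
  have cube4: "B \<subseteq> dyadic_cube4 k0 v"
    unfolding B_def using scale \<open>2 \<le> n\<close> S(1) unfolding \<tau>_def by (rule corner_cubes_subset_dyadic_cube4)
  have "(+) (real n *\<^sub>R v) ` S \<subseteq> int_lattice"
    using S(1) v lattice_box_subset_int_lattice by (blast intro: int_lattice_add int_lattice_scaleR_of_nat)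
  then have union: "\<exists>F. F \<subseteq> dyadic_cubes k \<and> B = \<Union>F"
    unfolding B_def by (rule corner_cubes_eq_Union_dyadic_cubes)
  have "lmeas B \<le> ennreal (2 ^ DIM('a) * real (card ((+) (real n *\<^sub>R v) ` S)) * \<tau> ^ DIM('a))"
    unfolding B_def \<tau>_def using finS by (intro lmeas_corner_cubes_le) simp
  also have "\<dots> \<le> ennreal (\<eta> * (\<tau> * real n) ^ DIM('a))"
    using S(2) \<tau> by (intro ennreal_leI) (simp add: card_image power_mult_distrib mult_right_mono flip: mult.assoc)
  also have "\<dots> = ennreal \<eta> * lmeas (dyadic_cube k0 v)"
    using \<tau> by (simp add: lmeas_dyadic_cube ennreal_mult'' flip: scale)
  finally have measure: "lmeas B \<le> ennreal \<eta> * lmeas (dyadic_cube k0 v)" .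
  have sumset: "\<forall>A a0. A \<subseteq> cbox 0 (2 powr - of_int k0 *\<^sub>R One) \<and> covering_number \<delta> A \<ge> N \<and> a0 \<in> A \<longrightarrow>
      lmeas ((+) a0 ` dyadic_cube k0 v \<inter> set_plus A B) \<ge> ennreal (1 - \<epsilon>) * lmeas (dyadic_cube k0 v)"
    unfolding B_def
    by (intro allI impI, elim conjE)
      (rule lmeas_translated_cube_inter_sumset_ge[OF scale[unfolded \<tau>_def] \<delta>[unfolded \<tau>_def] v good])
  show ?thesis by (intro conjI cube4 union measure sumset)
qed

lemma eventually_sequentially_ex_power2:
  assumes "eventually P sequentially"
  shows "\<exists>j. P (2 ^ j)"
proof -
  obtain n0 where "\<forall>n\<ge>n0. P n" using assms by (auto simp: eventually_sequentially)
  then have "P (2 ^ n0)" using less_exp[of n0] by simp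
  then show ?thesis ..
qed

lemma good_cubes_at_scale:
  fixes \<eta> \<epsilon> \<delta> :: real and N m' :: nat
  assumes sparse: "\<forall>\<^sub>F n in sequentially. \<exists>S :: 'a::euclidean_space set. good_lattice_set \<eta> \<epsilon> N n S"
    and "0 < \<delta>"
  shows "\<exists>k::int. \<forall>v::'a. v \<in> int_lattice \<longrightarrow>
              (\<exists>B. B \<subseteq> dyadic_cube4 (int m') v
                 \<and> (\<exists>F. F \<subseteq> dyadic_cubes k \<and> B = \<Union>F)
                 \<and> lmeas B \<le> ennreal \<eta> * lmeas (dyadic_cube (int m') v)
                 \<and> (\<forall>A a0. A \<subseteq> cbox 0 ((2 powr (- real m')) *\<^sub>R One)
                        \<and> covering_number \<delta> A \<ge> N \<and> a0 \<in> A \<longrightarrow>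
                        lmeas (((+) a0 ` dyadic_cube (int m') v) \<inter> set_plus A B)
                          \<ge> ennreal (1 - \<epsilon>) * lmeas (dyadic_cube (int m') v)))"
proof -
  have "\<forall>\<^sub>F n in sequentially. 2 \<le> n \<and> real DIM('a) * 2 powr - real m' / \<delta> \<le> real n"
    using filterlim_real_sequentially unfolding filterlim_at_top by (intro eventually_conj eventually_ge_at_top) blast
  from eventually_sequentially_ex_power2[OF eventually_conj[OF this sparse]]
  obtain j and S :: "'a set" where n: "2 \<le> (2::nat) ^ j" "real DIM('a) * 2 powr - real m' / \<delta> \<le> real (2 ^ j)"
    and good: "good_lattice_set \<eta> \<epsilon> N (2 ^ j) S"
    by blast
  define k where "k = int m' + int j"
  have scale: "2 powr - of_int k * real (2 ^ j) = 2 powr - of_int (int m')"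
    by (simp add: k_def powr_realpow[symmetric] flip: powr_add)
  have "real DIM('a) * 2 powr - real m' \<le> \<delta> * 2 ^ j"
    using n(2) \<open>0 < \<delta>\<close> by (simp add: pos_divide_le_eq mult.commute)
  then have "(real DIM('a) * 2 powr - of_int k) * 2 ^ j \<le> \<delta> * 2 ^ j"
    using scale by (simp add: mult_ac)
  then have \<delta>: "real DIM('a) * 2 powr - of_int k \<le> \<delta>" by simp
  show ?thesis
    by (intro exI[of _ k] allI impI exI)
      (rule corner_cubes_good_for_cube[OF scale n(1) \<delta> _ good, unfolded of_int_of_nat_eq])
qed

theorem corollary4p6:
  fixes \<eta> \<epsilon> :: real
  assumes "0 < \<eta>" "\<eta> \<le> 1/3" "0 < \<epsilon>" "\<epsilon> \<le> 1/3"
  shows "\<exists>N::nat. \<forall>m'::nat. \<exists>\<delta>0>0. \<forall>\<delta>. 0 < \<delta> \<and> \<delta> < \<delta>0 \<longrightarrow>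
           (\<exists>k::int. \<forall>v::'a::euclidean_space. v \<in> int_lattice \<longrightarrow>
              (\<exists>B. B \<subseteq> dyadic_cube4 (int m') v
                 \<and> (\<exists>F. F \<subseteq> dyadic_cubes k \<and> B = \<Union>F)
                 \<and> lmeas B \<le> ennreal \<eta> * lmeas (dyadic_cube (int m') v)
                 \<and> (\<forall>A a0. A \<subseteq> cbox 0 ((2 powr (- real m')) *\<^sub>R One)
                        \<and> covering_number \<delta> A \<ge> N \<and> a0 \<in> A \<longrightarrow>
                        lmeas (((+) a0 ` dyadic_cube (int m') v) \<inter> set_plus A B)
                          \<ge> ennreal (1 - \<epsilon>) * lmeas (dyadic_cube (int m') v))))"
proof -
  obtain N where sparse: "\<forall>\<^sub>F n in sequentially. \<exists>S :: 'a set. good_lattice_set \<eta> \<epsilon> N n S"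
    by (rule sparse_lattice_set[OF assms(1) assms(3)])
  show ?thesis
    by (intro exI[of _ N] allI exI[of _ "1::real"] conjI impI zero_less_one good_cubes_at_scale[OF sparse]) auto
qed

end
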